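(* Let $R$ be an integral domain such that every finitely generated ideal of $R$ is a multiplication ideal. Then $R$ is an avoidance ring.
   Context: All rings are commutative with $1\neq 0$. An ideal $I$ of $R$ is a multiplication ideal if every ideal of $R$ contained in $I$ is of the form $IJ$ for some ideal $J$ of $R$. An ideal $I$ has avoidance if whenever $I_1,\ldots,I_n$ are finitely many ideals of $R$ with $I\subseteq\bigcup_{k=1}^n I_k$, then $I\subseteq I_k$ for some $k$. A ring is an avoidance ring if every ideal of it has avoidance. *)

theory Defs
  imports "HOL-Algebra.Ideal_Product"
begin

definition finitely_generated_ideal :: "('a, 'b) ring_scheme \<Rightarrow> 'a set \<Rightarrow> bool" where
  "finitely_generated_ideal R I \<longleftrightarrow>
     (\<exists>S. finite S \<and> S \<subseteq> carrier R \<and> I = genideal R S)"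

definition multiplication_ideal :: "('a, 'b) ring_scheme \<Rightarrow> 'a set \<Rightarrow> bool" where
  "multiplication_ideal R I \<longleftrightarrow>
     ideal I R \<and> (\<forall>J. ideal J R \<and> J \<subseteq> I \<longrightarrow> (\<exists>K. ideal K R \<and> J = ideal_prod R I K))"

definition has_avoidance :: "('a, 'b) ring_scheme \<Rightarrow> 'a set \<Rightarrow> bool" where
  "has_avoidance R I \<longleftrightarrow>
     (\<forall>(n::nat) (Is :: nat \<Rightarrow> 'a set).
        (\<forall>k<n. ideal (Is k) R) \<and> I \<subseteq> (\<Union>k<n. Is k) \<longrightarrow> (\<exists>k<n. I \<subseteq> Is k))"

definition avoidance_ring :: "('a, 'b) ring_scheme \<Rightarrow> bool" where
  "avoidance_ring R \<longleftrightarrow> (\<forall>I. ideal I R \<longrightarrow> has_avoidance R I)"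

end

theory Submission
  imports Defs "HOL-Algebra.Ring_Divisibility"
begin

text \<open>
  By a reduction to finitely generated subideals it suffices to show that a nonzero multiplication
  ideal \<open>J\<close> of a domain has avoidance. Write \<open>J \<inter> I\<^sub>k = J K\<^sub>k\<close>; if no \<open>K\<^sub>k\<close> is the unit ideal,
  enlarge each to a maximal ideal \<open>M\<^sub>k\<close>. Cancelling a nonzero principal subideal \<open>aR = J L\<close> shows
  \<open>J \<noteq> J M\<^sub>k\<close>, and since distinct maximal ideals are comaximal, a Chinese-remainder style
  interpolation yields one \<open>x \<in> J\<close> outside every \<open>J M\<^sub>k\<close>. Such an \<open>x\<close> lies in no \<open>J \<inter> I\<^sub>k\<close>,
  so the \<open>I\<^sub>k\<close> do not cover \<open>J\<close>.
\<close>

lemma (in ring) ideal_contained_in_maximalideal: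
  assumes I: "ideal I R" and I_proper: "I \<noteq> carrier R"
  shows "\<exists>M. maximalideal M R \<and> I \<subseteq> M"
proof -
  define A where "A = {J. ideal J R \<and> I \<subseteq> J \<and> \<one> \<notin> J}"
  have "\<exists>M\<in>A. \<forall>J\<in>A. M \<subseteq> J \<longrightarrow> J = M"
  proof (rule subset_Zorn)
    fix C assume C: "subset.chain A C"
    show "\<exists>U\<in>A. \<forall>J\<in>C. J \<subseteq> U"
    proof (cases "C = {}")
      case True
      have "\<one> \<notin> I" using I I_proper ideal.one_imp_carrier by blast
      with True I show ?thesis unfolding A_def by auto
    next
      case False
      have "subset.chain {J. ideal J R} C" using C unfolding pred_on.chain_def A_def by auto
      with False have "ideal (\<Union>C) R" using chain_Union_is_ideal[of C] by simp
      moreover have "I \<subseteq> \<Union>C" "\<one> \<notin> \<Union>C" using C False unfolding pred_on.chain_def A_def by blast+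
      ultimately show ?thesis unfolding A_def by blast
    qed
  qed
  then obtain M where M: "M \<in> A" and M_max: "\<And>J. J \<in> A \<Longrightarrow> M \<subseteq> J \<Longrightarrow> J = M" by blast
  have "maximalideal M R"
  proof (rule maximalidealI)
    show "ideal M R" "carrier R \<noteq> M" using M unfolding A_def by auto
    fix J assume "ideal J R" "M \<subseteq> J" "J \<subseteq> carrier R"
    then show "J = M \<or> J = carrier R"
      using M M_max ideal.one_imp_carrier unfolding A_def by blast
  qed
  with M show ?thesis unfolding A_def by auto
qed

lemma (in cring) maximalideals_comaximal:
  assumes M: "maximalideal M R" and M': "maximalideal M' R" and "M \<noteq> M'"
  shows "\<exists>u\<in>M. \<one> \<ominus> u \<in> M'"
proof -
  have iM: "ideal M R" and iM': "ideal M' R" using M M' maximalideal.axioms(1) by blast+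
  have sum_ideal: "ideal (M <+> M') R" using add_ideals[OF iM iM'] .
  have "M \<subseteq> M <+> M'" "M' \<subseteq> M <+> M'"
    using genideal_self[of "M \<union> M'"] union_genideal[OF iM iM'] ideal.Icarr[OF iM] ideal.Icarr[OF iM']
    by blast+
  then have "M <+> M' = carrier R"
    using maximalideal.I_maximal[OF M sum_ideal] maximalideal.I_maximal[OF M' iM]
      maximalideal.I_notcarr[OF M] ideal.Icarr[OF sum_ideal] ideal.Icarr[OF iM] \<open>M \<noteq> M'\<close>
    by blast
  then obtain u v where "u \<in> M" "v \<in> M'" "\<one> = u \<oplus> v"
    unfolding set_add_def' by (metis (no_types, lifting) one_closed UN_E singletonD)
  moreover have "(u \<oplus> v) \<ominus> u = v" if "u \<in> carrier R" "v \<in> carrier R"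
    using that by algebra
  ultimately show ?thesis using ideal.Icarr[OF iM] ideal.Icarr[OF iM'] by metis
qed

lemma (in ring) ideal_minus_closed:
  "ideal I R \<Longrightarrow> a \<in> I \<Longrightarrow> b \<in> I \<Longrightarrow> a \<ominus> b \<in> I"
  by (metis additive_subgroup.a_closed additive_subgroup.a_inv_closed ideal.axioms(1) ideal.Icarr minus_eq)

lemma (in cring) exists_separating_element_maximalideals:
  fixes n :: nat
  assumes M: "maximalideal M R"
    and Ms: "\<forall>k<n. maximalideal (Ms k) R \<and> Ms k \<noteq> M"
  shows "\<exists>e\<in>carrier R. (\<forall>k<n. e \<in> Ms k) \<and> \<one> \<ominus> e \<in> M"
  using Ms
proof (induction n)
  case 0
  have "\<one> \<ominus> \<one> \<in> M"
    using M maximalideal.axioms(1) additive_subgroup.zero_closed ideal.axioms(1) r_neg minus_eq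
    by (metis one_closed)
  then show ?case by blast
next
  case (Suc n)
  then obtain e where e: "e \<in> carrier R" "\<forall>k<n. e \<in> Ms k" "\<one> \<ominus> e \<in> M" by auto
  obtain u where u: "u \<in> M" "\<one> \<ominus> u \<in> Ms n"
    using maximalideals_comaximal[OF M] Suc.prems by blast
  have iM: "ideal M R" using M maximalideal.axioms(1) by blast
  have uc: "u \<in> carrier R" using ideal.Icarr[OF iM u(1)] .
  have "\<forall>k<Suc n. e \<otimes> (\<one> \<ominus> u) \<in> Ms k"
    using e u uc Suc.prems ideal.I_l_closed ideal.I_r_closed maximalideal.axioms(1)
    by (metis less_Suc_eq minus_closed one_closed)
  moreover have "\<one> \<ominus> e \<otimes> (\<one> \<ominus> u) = (\<one> \<ominus> e) \<oplus> e \<otimes> u"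
    using e(1) uc by algebra
  then have "\<one> \<ominus> e \<otimes> (\<one> \<ominus> u) \<in> M"
    using e(3) ideal.I_l_closed[OF iM u(1) e(1)] iM
    by (metis additive_subgroup.a_closed ideal.axioms(1))
  ultimately show ?case using e(1) uc by blast
qed

lemma ideal_prod_mono:
  assumes "I \<subseteq> I'" "J \<subseteq> J'"
  shows "ideal_prod R I J \<subseteq> ideal_prod R I' J'"
proof
  fix x assume "x \<in> ideal_prod R I J"
  then show "x \<in> ideal_prod R I' J'"
    by (induct x rule: ideal_prod.induct) (auto intro: ideal_prod.intros simp: assms[THEN subsetD])
qed

lemma (in cring) ideal_not_subset_Union_prod_maximalideals:
  fixes n :: nat
  assumes J: "ideal J R"
    and Ms: "\<forall>k<n. maximalideal (Ms k) R" and not_subset: "\<forall>k<n. \<not> J \<subseteq> J \<cdot> Ms k"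
  shows "\<exists>x\<in>J. \<forall>k<n. x \<notin> J \<cdot> Ms k"
  using Ms not_subset
proof (induction n)
  case 0
  show ?case using J additive_subgroup.zero_closed ideal.axioms(1) by blast
next
  case (Suc n)
  then obtain x where x: "x \<in> J" "\<forall>k<n. x \<notin> J \<cdot> Ms k" by auto
  show ?case
  proof (cases "\<exists>k<n. Ms n = Ms k")
    case True
    with x show ?thesis using less_Suc_eq by auto
  next
    case False
    with Suc.prems(1) have "\<forall>k<n. maximalideal (Ms k) R \<and> Ms k \<noteq> Ms n" by auto
    then obtain e where e: "e \<in> carrier R" "\<forall>k<n. e \<in> Ms k" "\<one> \<ominus> e \<in> Ms n"
      using exists_separating_element_maximalideals Suc.prems(1) by blast
    obtain y where y: "y \<in> J" "y \<notin> J \<cdot> Ms n" using Suc.prems(2) by auto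
    have xc: "x \<in> carrier R" and yc: "y \<in> carrier R" using ideal.Icarr[OF J] x(1) y(1) by auto
    \<comment> \<open>\<open>x'\<close> is congruent to \<open>x\<close> modulo each \<open>Ms k\<close>, \<open>k < n\<close>, and to \<open>y\<close> modulo \<open>Ms n\<close>\<close>
    define x' where "x' = x \<oplus> (y \<ominus> x) \<otimes> e"
    have "x' \<in> J"
      unfolding x'_def using J x(1) ideal.I_r_closed[OF J ideal_minus_closed[OF J y(1) x(1)] e(1)]
      by (meson additive_subgroup.a_closed ideal.axioms(1))
    moreover have "x' \<notin> J \<cdot> Ms k" if k: "k < Suc n" for k
    proof
      assume x'_in: "x' \<in> J \<cdot> Ms k"
      have P: "ideal (J \<cdot> Ms k) R"
        using ideal_prod_is_ideal[OF J] Suc.prems(1) k maximalideal.axioms(1) by blast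
      show False
      proof (cases "k = n")
        case True
        have "(x \<ominus> y) \<otimes> (\<one> \<ominus> e) \<in> J \<cdot> Ms k"
          using ideal_prod.prod[OF ideal_minus_closed[OF J x(1) y(1)]] e(3) True by simp
        moreover have "y = x' \<ominus> (x \<ominus> y) \<otimes> (\<one> \<ominus> e)"
          unfolding x'_def using xc yc e(1) by algebra
        ultimately show False using ideal_minus_closed[OF P x'_in] y(2) True by metis
      next
        case False
        with k have "k < n" by simp
        with e(2) have "e \<in> Ms k" by blast
        then have "(y \<ominus> x) \<otimes> e \<in> J \<cdot> Ms k"
          using ideal_prod.prod[OF ideal_minus_closed[OF J y(1) x(1)]] by blast
        moreover have "x = x' \<ominus> (y \<ominus> x) \<otimes> e"
          unfolding x'_def using xc yc e(1) by algebra
        ultimately show False using ideal_minus_closed[OF P x'_in] x(2) \<open>k < n\<close> by metis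
      qed
    qed
    ultimately show ?thesis by blast
  qed
qed

lemma (in cring) mem_ideal_prod_cgenideal:
  assumes a: "a \<in> carrier R" and M: "ideal M R" and x: "x \<in> (PIdl a) \<cdot> M"
  shows "\<exists>m\<in>M. x = a \<otimes> m"
  using x
proof (induct x rule: ideal_prod.induct)
  case (prod i j)
  then obtain r where r: "r \<in> carrier R" "i = r \<otimes> a" unfolding cgenideal_def by blast
  have "i \<otimes> j = a \<otimes> (r \<otimes> j)" using r a ideal.Icarr[OF M prod(2)] by (simp add: m_ac)
  with ideal.I_l_closed[OF M prod(2) r(1)] show ?case by blast
next
  case (sum s1 s2)
  then obtain m1 m2 where m: "m1 \<in> M" "m2 \<in> M" "s1 = a \<otimes> m1" "s2 = a \<otimes> m2" by blast
  then have "s1 \<oplus> s2 = a \<otimes> (m1 \<oplus> m2)" using a ideal.Icarr[OF M] by (simp add: r_distr)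
  with m(1,2) show ?case using additive_subgroup.a_closed[OF ideal.axioms(1)[OF M]] by blast
qed

lemma (in domain) multiplication_ideal_not_subset_prod:
  assumes mJ: "multiplication_ideal R J" and J_nonzero: "J \<noteq> {\<zero>}"
    and M: "ideal M R" and M_proper: "M \<noteq> carrier R"
  shows "\<not> J \<subseteq> J \<cdot> M"
proof
  assume JM: "J \<subseteq> J \<cdot> M"
  have J: "ideal J R" using mJ unfolding multiplication_ideal_def by blast
  obtain a where a: "a \<in> J" "a \<noteq> \<zero>"
    using J_nonzero additive_subgroup.zero_closed[OF ideal.axioms(1)[OF J]] by blast
  have ac: "a \<in> carrier R" using ideal.Icarr[OF J a(1)] .
  have "ideal (PIdl a) R" "PIdl a \<subseteq> J"
    using cgenideal_ideal[OF ac] cgenideal_minimal[OF J a(1)] .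
  then obtain L where L: "ideal L R" "PIdl a = J \<cdot> L"
    using mJ unfolding multiplication_ideal_def by blast
  have "PIdl a \<subseteq> (J \<cdot> M) \<cdot> L" unfolding L(2) by (rule ideal_prod_mono[OF JM order_refl])
  also have "\<dots> = J \<cdot> (L \<cdot> M)"
    using ideal_prod_assoc[OF J M L(1)] ideal_prod_commute[OF M L(1)] by simp
  also have "\<dots> = (PIdl a) \<cdot> M"
    unfolding L(2) using ideal_prod_assoc[OF J L(1) M] by simp
  finally have "a \<in> (PIdl a) \<cdot> M" using cgenideal_self[OF ac] by blast
  then obtain m where m: "m \<in> M" "a \<otimes> \<one> = a \<otimes> m"
    using mem_ideal_prod_cgenideal[OF ac M] ac by auto
  then have "\<one> = m" using m_lcancel[OF a(2) ac one_closed ideal.Icarr[OF M m(1)]] by simp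
  with m(1) show False using M M_proper ideal.one_imp_carrier by blast
qed

lemma (in domain) multiplication_ideal_has_avoidance:
  assumes mJ: "multiplication_ideal R J" and J_nonzero: "J \<noteq> {\<zero>}"
  shows "has_avoidance R J"
  unfolding has_avoidance_def
proof (intro allI impI, elim conjE)
  fix n and Is :: "nat \<Rightarrow> 'a set"
  assume Is: "\<forall>k<n. ideal (Is k) R" and cover: "J \<subseteq> (\<Union>k<n. Is k)"
  have J: "ideal J R" using mJ unfolding multiplication_ideal_def by blast
  show "\<exists>k<n. J \<subseteq> Is k"
  proof (rule ccontr)
    assume not_subset: "\<not> (\<exists>k<n. J \<subseteq> Is k)"
    have "\<forall>k<n. \<exists>K. ideal K R \<and> J \<inter> Is k = J \<cdot> K"
      using mJ i_intersect[OF J] Is unfolding multiplication_ideal_def by blast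
    then obtain Ks where Ks: "\<forall>k<n. ideal (Ks k) R \<and> J \<inter> Is k = J \<cdot> Ks k" by metis
    have "Ks k \<noteq> carrier R" if "k < n" for k
    proof
      assume "Ks k = carrier R"
      then have "J \<inter> Is k = J" using Ks ideal_prod_one[OF J] that by simp
      with not_subset that show False by blast
    qed
    then have "\<forall>k<n. \<exists>M. maximalideal M R \<and> Ks k \<subseteq> M"
      using Ks ideal_contained_in_maximalideal by blast
    then obtain Ms where Ms: "\<forall>k<n. maximalideal (Ms k) R \<and> Ks k \<subseteq> Ms k" by metis
    have "\<forall>k<n. \<not> J \<subseteq> J \<cdot> Ms k"
      using Ms multiplication_ideal_not_subset_prod[OF mJ J_nonzero]
      by (simp add: maximalideal.axioms(1) maximalideal.I_notcarr[symmetric])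
    then obtain x where x: "x \<in> J" "\<forall>k<n. x \<notin> J \<cdot> Ms k"
      using ideal_not_subset_Union_prod_maximalideals[OF J] Ms by blast
    then obtain k where k: "k < n" "x \<in> J \<inter> Is k" using cover by blast
    then have "x \<in> J \<cdot> Ms k" using Ks Ms ideal_prod_mono[of J J "Ks k" "Ms k"] by blast
    with x(2) k(1) show False by blast
  qed
qed

lemma (in ring) has_avoidance_of_finitely_generated_subideals:
  assumes I: "ideal I R"
    and fg: "\<And>J. ideal J R \<Longrightarrow> finitely_generated_ideal R J \<Longrightarrow> J \<subseteq> I \<Longrightarrow> has_avoidance R J"
  shows "has_avoidance R I"
  unfolding has_avoidance_def
proof (intro allI impI, elim conjE)
  fix n and Is :: "nat \<Rightarrow> 'a set"
  assume Is: "\<forall>k<n. ideal (Is k) R" and cover: "I \<subseteq> (\<Union>k<n. Is k)"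
  show "\<exists>k<n. I \<subseteq> Is k"
  proof (rule ccontr)
    assume "\<not> (\<exists>k<n. I \<subseteq> Is k)"
    then have "\<forall>k<n. \<exists>x. x \<in> I \<and> x \<notin> Is k" by blast
    then obtain f where f: "\<forall>k<n. f k \<in> I \<and> f k \<notin> Is k" by metis
    define J where "J = Idl (f ` {..<n})"
    have gens: "f ` {..<n} \<subseteq> I" using f by blast
    then have gens_carr: "f ` {..<n} \<subseteq> carrier R" using ideal.Icarr[OF I] by blast
    have "ideal J R" "J \<subseteq> I" "finitely_generated_ideal R J"
      unfolding J_def finitely_generated_ideal_def
      using genideal_ideal[OF gens_carr] genideal_minimal[OF I gens] gens_carr by auto
    then have "has_avoidance R J" "J \<subseteq> (\<Union>k<n. Is k)" using fg cover by auto
    then obtain k where "k < n" "J \<subseteq> Is k" using Is unfolding has_avoidance_def by blast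
    moreover have "f k \<in> J" if "k < n"
      using that genideal_self[OF gens_carr] unfolding J_def by blast
    ultimately show False using f by blast
  qed
qed

theorem corollary3p14:
  fixes R :: "('a, 'b) ring_scheme"
  assumes "domain R"
    and "\<forall>I. ideal I R \<and> finitely_generated_ideal R I \<longrightarrow> multiplication_ideal R I"
  shows "avoidance_ring R"
  unfolding avoidance_ring_def
proof (intro allI impI)
  interpret domain R by fact
  fix I assume "ideal I R"
  then show "has_avoidance R I"
  proof (rule has_avoidance_of_finitely_generated_subideals)
    fix J assume "ideal J R" "finitely_generated_ideal R J"
    then have "multiplication_ideal R J" using assms(2) by blast
    then show "has_avoidance R J"
      using multiplication_ideal_has_avoidance by (cases "J = {\<zero>\<^bsub>R\<^esub>}") (auto simp: has_avoidance_def)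
  qed
qed

end
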